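(* Let $\hat h^\bullet$ be a relative differential extension of a cohomology theory $h^\bullet$ and let $\rho\colon A\to X$ be a smooth map of manifolds. Let $\Omega^\bullet_{\mathrm{ch}}(\rho)\subset\Omega^\bullet_{\mathrm{cl}}(\rho;\mathfrak h^\bullet_{\mathbb R})$ be the subgroup of closed relative forms $(\omega,\eta)$ whose de Rham class $[(\omega,\eta)]\in H^\bullet_{dR}(\rho;\mathfrak h^\bullet_{\mathbb R})$ lies in the image of the Chern character $\mathrm{ch}\colon h^\bullet(\rho)\to H^\bullet_{dR}(\rho;\mathfrak h^\bullet_{\mathbb R})$. Then the image of the curvature $R\colon\hat h^\bullet(\rho)\to\Omega^\bullet_{\mathrm{cl}}(\rho;\mathfrak h^\bullet_{\mathbb R})$ is exactly $\Omega^\bullet_{\mathrm{ch}}(\rho)$; consequently the sequence $$0\to\hat h^\bullet_{\mathrm{fl}}(\rho)\to\hat h^\bullet(\rho)\xrightarrow{R}\Omega^\bullet_{\mathrm{ch}}(\rho)\to 0$$ is exact, where $\hat h^\bullet_{\mathrm{fl}}(\rho)=\ker R$ is the group of flat classes.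
   Context: Let $h^\bullet$ be a cohomology theory defined on continuous maps: for a map $\rho\colon A\to X$, $h^\bullet(\rho)$ is its relative cohomology (the reduced cohomology of the mapping cone), fitting in the long exact sequence $\cdots\to h^n(\rho)\to h^n(X)\xrightarrow{\rho^*}h^n(A)\to h^{n+1}(\rho)\to\cdots$. Put $\mathfrak h^\bullet=h^\bullet(pt)$, $\mathfrak h^\bullet_{\mathbb R}=\mathfrak h^\bullet\otimes_{\mathbb Z}\mathbb R$. Let $\mathcal M_2$ be the category whose objects are smooth maps $\rho\colon A\to X$ between smooth manifolds (possibly with boundary), a morphism from $\eta\colon B\to Y$ to $\rho$ being a pair $(f,g)$ of smooth maps $f\colon Y\to X$, $g\colon B\to A$ with $f\circ\eta=\rho\circ g$. For $\rho\colon A\to X$ set $\Omega^\bullet(\rho;\mathfrak h^\bullet_{\mathbb R})=\Omega^\bullet(X;\mathfrak h^\bullet_{\mathbb R})\oplus\Omega^{\bullet-1}(A;\mathfrak h^\bullet_{\mathbb R})$ (graded by total degree) with differential $d(\omega,\eta)=(d\omega,\rho^*\omega-d\eta)$; its cohomology is $H^\bullet_{dR}(\rho;\mathfrak h^\bullet_{\mathbb R})$, and $\mathrm{ch}$ denotes the relative Chern character of $h^\bullet$. A relative differential extension of $h^\bullet$ is a contravariant functor $\hat h^\bullet$ from $\mathcal M_2$ to graded abelian groups with natural transformations $I\colon\hat h^\bullet(\rho)\to h^\bullet(\rho)$, $R\colon\hat h^\bullet(\rho)\to\Omega^\bullet_{\mathrm{cl}}(\rho;\mathfrak h^\bullet_{\mathbb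 R})$ and $a\colon\Omega^{\bullet-1}(\rho;\mathfrak h^\bullet_{\mathbb R})/\mathrm{Im}(d)\to\hat h^\bullet(\rho)$ such that: (A1) $R\circ a=d$; (A2) the de Rham class of $R(\hat\alpha)$ equals $\mathrm{ch}(I(\hat\alpha))$; (A3) the sequence $h^{\bullet-1}(\rho)\xrightarrow{\mathrm{ch}}\Omega^{\bullet-1}(\rho;\mathfrak h^\bullet_{\mathbb R})/\mathrm{Im}(d)\xrightarrow{a}\hat h^\bullet(\rho)\xrightarrow{I}h^\bullet(\rho)\to0$ is exact; (A4) writing $R=(R',\mathrm{cov})$ for the two components and $\pi$ for the natural morphism from the object $\emptyset\to X$ to $\rho$ (with $\hat h^\bullet(X):=\hat h^\bullet(\emptyset\to X)$), one has $\rho^*\circ\pi^*=a\circ\mathrm{cov}$. A class $\hat\alpha$ is flat if $R(\hat\alpha)=0$. *)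

theory Defs
  imports Main "HOL-Library.Product_Plus"
begin

(* Graded abelian groups are modelled as an ambient abelian group type together
   with the family of its degree-n components (subgroups), indexed by n :: int. *)

definition subgrp :: "'a::ab_group_add set \<Rightarrow> bool" where
  "subgrp S \<longleftrightarrow> 0 \<in> S \<and> (\<forall>x\<in>S. \<forall>y\<in>S. x + y \<in> S \<and> x - y \<in> S)"

definition additive_on :: "'a::ab_group_add set \<Rightarrow> ('a \<Rightarrow> 'b::ab_group_add) \<Rightarrow> bool" where
  "additive_on S f \<longleftrightarrow> (\<forall>x\<in>S. \<forall>y\<in>S. f (x + y) = f x + f y)"

(* de Rham data of rho : A -> X with coefficients in h_R:
   forms on X (FX n, differential dX), forms on A (FA n, differential dA),
   pullback rho^* = pull. *)
definition deRham_data ::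
  "(int \<Rightarrow> 'x::ab_group_add set) \<Rightarrow> ('x \<Rightarrow> 'x) \<Rightarrow>
   (int \<Rightarrow> 'y::ab_group_add set) \<Rightarrow> ('y \<Rightarrow> 'y) \<Rightarrow> ('x \<Rightarrow> 'y) \<Rightarrow> bool" where
  "deRham_data FX dX FA dA pull \<longleftrightarrow>
     (\<forall>n. subgrp (FX n) \<and> subgrp (FA n)
        \<and> dX ` FX n \<subseteq> FX (n+1) \<and> additive_on (FX n) dX
        \<and> (\<forall>w\<in>FX n. dX (dX w) = 0)
        \<and> dA ` FA n \<subseteq> FA (n+1) \<and> additive_on (FA n) dA
        \<and> (\<forall>e\<in>FA n. dA (dA e) = 0)
        \<and> pull ` FX n \<subseteq> FA n \<and> additive_on (FX n) pull
        \<and> (\<forall>w\<in>FX n. pull (dX w) = dA (pull w)))"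

definition rel_forms :: "(int \<Rightarrow> 'x set) \<Rightarrow> (int \<Rightarrow> 'y set) \<Rightarrow> int \<Rightarrow> ('x \<times> 'y) set" where
  "rel_forms FX FA n = FX n \<times> FA (n - 1)"

definition rel_d :: "('x \<Rightarrow> 'x) \<Rightarrow> ('y \<Rightarrow> 'y) \<Rightarrow> ('x \<Rightarrow> 'y) \<Rightarrow> 'x \<times> 'y \<Rightarrow> 'x \<times> ('y::ab_group_add)" where
  "rel_d dX dA pull = (\<lambda>(w, e). (dX w, pull w - dA e))"

definition closed_rel_forms ::
  "(int \<Rightarrow> 'x::ab_group_add set) \<Rightarrow> (int \<Rightarrow> 'y::ab_group_add set) \<Rightarrow> ('x \<Rightarrow> 'x) \<Rightarrow> ('y \<Rightarrow> 'y)
   \<Rightarrow> ('x \<Rightarrow> 'y) \<Rightarrow> int \<Rightarrow> ('x \<times> 'y) set" where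
  "closed_rel_forms FX FA dX dA pull n = {p \<in> rel_forms FX FA n. rel_d dX dA pull p = 0}"

(* Chern character ch : h^n(rho) -> H^n_dR(rho; h_R), given by a choice of closed
   representative chr x of the de Rham class ch(x); additivity is required in
   cohomology, i.e. up to exact forms. *)
definition chern_data ::
  "(int \<Rightarrow> 'x::ab_group_add set) \<Rightarrow> ('x \<Rightarrow> 'x) \<Rightarrow> (int \<Rightarrow> 'y::ab_group_add set) \<Rightarrow> ('y \<Rightarrow> 'y)
   \<Rightarrow> ('x \<Rightarrow> 'y) \<Rightarrow> (int \<Rightarrow> 'c::ab_group_add set) \<Rightarrow> ('c \<Rightarrow> 'x \<times> 'y) \<Rightarrow> bool" where
  "chern_data FX dX FA dA pull C chr \<longleftrightarrow>
     (\<forall>n. subgrp (C n)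
        \<and> chr ` C n \<subseteq> closed_rel_forms FX FA dX dA pull n
        \<and> (\<forall>x\<in>C n. \<forall>y\<in>C n. \<exists>q\<in>rel_forms FX FA (n - 1).
              chr (x + y) = chr x + chr y + rel_d dX dA pull q))"

definition Omega_ch ::
  "(int \<Rightarrow> 'x::ab_group_add set) \<Rightarrow> ('x \<Rightarrow> 'x) \<Rightarrow> (int \<Rightarrow> 'y::ab_group_add set) \<Rightarrow> ('y \<Rightarrow> 'y)
   \<Rightarrow> ('x \<Rightarrow> 'y) \<Rightarrow> (int \<Rightarrow> 'c set) \<Rightarrow> ('c \<Rightarrow> 'x \<times> 'y) \<Rightarrow> int \<Rightarrow> ('x \<times> 'y) set" where
  "Omega_ch FX dX FA dA pull C chr n =
     {p \<in> closed_rel_forms FX FA dX dA pull n.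
        \<exists>x\<in>C n. \<exists>q\<in>rel_forms FX FA (n - 1). p = chr x + rel_d dX dA pull q}"

(* Axioms (A1)-(A3) of a relative differential extension, evaluated at the object rho.
   a is given on forms and required to vanish on exact forms (so it is defined on
   Omega^{n-1}/Im d). *)
definition rel_diff_ext_at ::
  "(int \<Rightarrow> 'x::ab_group_add set) \<Rightarrow> ('x \<Rightarrow> 'x) \<Rightarrow> (int \<Rightarrow> 'y::ab_group_add set) \<Rightarrow> ('y \<Rightarrow> 'y)
   \<Rightarrow> ('x \<Rightarrow> 'y) \<Rightarrow> (int \<Rightarrow> 'c::ab_group_add set) \<Rightarrow> ('c \<Rightarrow> 'x \<times> 'y)
   \<Rightarrow> (int \<Rightarrow> 'h::ab_group_add set) \<Rightarrow> ('h \<Rightarrow> 'c) \<Rightarrow> ('h \<Rightarrow> 'x \<times> 'y) \<Rightarrow> ('x \<times> 'y \<Rightarrow> 'h) \<Rightarrow> bool" where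
  "rel_diff_ext_at FX dX FA dA pull C chr Hat I R a \<longleftrightarrow>
     (\<forall>n. subgrp (Hat n)
        \<and> I ` Hat n \<subseteq> C n \<and> additive_on (Hat n) I
        \<and> R ` Hat n \<subseteq> closed_rel_forms FX FA dX dA pull n \<and> additive_on (Hat n) R
        \<and> a ` rel_forms FX FA (n - 1) \<subseteq> Hat n \<and> additive_on (rel_forms FX FA (n - 1)) a
        \<and> (\<forall>q\<in>rel_forms FX FA (n - 2). a (rel_d dX dA pull q) = 0)
        \<comment> \<open>(A1) R o a = d\<close>
        \<and> (\<forall>q\<in>rel_forms FX FA (n - 1). R (a q) = rel_d dX dA pull q)
        \<comment> \<open>(A2) [R alpha] = ch (I alpha)\<close>
        \<and> (\<forall>\<alpha>\<in>Hat n. \<exists>q\<in>rel_forms FX FA (n - 1). R \<alpha> = chr (I \<alpha>) + rel_d dX dA pull q)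
        \<comment> \<open>(A3) exactness at Omega^{n-1}/Im d\<close>
        \<and> (\<forall>q\<in>rel_forms FX FA (n - 1).
             a q = 0 \<longleftrightarrow> (\<exists>x\<in>C (n - 1). \<exists>r\<in>rel_forms FX FA (n - 2). q = chr x + rel_d dX dA pull r))
        \<comment> \<open>(A3) exactness at hat h^n\<close>
        \<and> (\<forall>\<alpha>\<in>Hat n. I \<alpha> = 0 \<longleftrightarrow> (\<exists>q\<in>rel_forms FX FA (n - 1). \<alpha> = a q))
        \<comment> \<open>(A3) surjectivity of I\<close>
        \<and> I ` Hat n = C n)"

definition flat_classes :: "(int \<Rightarrow> 'h set) \<Rightarrow> ('h \<Rightarrow> 'x::ab_group_add \<times> 'y::ab_group_add) \<Rightarrow> int \<Rightarrow> 'h set" where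
  "flat_classes Hat R n = {\<alpha> \<in> Hat n. R \<alpha> = 0}"

end

theory Submission
  imports Defs
begin

text \<open>Every closed form representing a class in the image of ch is a curvature:
  given \<open>w = chr x + d q\<close>, lift \<open>x\<close> through the surjection \<open>I\<close> to some \<open>\<beta>\<close>;
  by (A2) \<open>R \<beta> = chr x + d q'\<close>, and by (A1) the correction \<open>\<beta> + a (q - q')\<close> has
  curvature exactly \<open>w\<close>. The converse inclusion is (A2) itself.\<close>

lemma subgrp_Times:
  assumes "subgrp S" "subgrp T"
  shows "subgrp (S \<times> T)"
  using assms unfolding subgrp_def by (auto simp: zero_prod_def)

lemma additive_on_diff:
  assumes "subgrp S" "additive_on S f" "x \<in> S" "y \<in> S"
  shows "f (x - y) = f x - f y"
proof -
  have "x - y \<in> S" using assms(1,3,4) unfolding subgrp_def by blast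
  then have "f (x - y + y) = f (x - y) + f y"
    using assms(2,4) unfolding additive_on_def by blast
  then show ?thesis by (simp add: algebra_simps)
qed

lemma subgrp_rel_forms:
  assumes "deRham_data FX dX FA dA pull"
  shows "subgrp (rel_forms FX FA m)"
  using assms unfolding deRham_data_def rel_forms_def by (blast intro: subgrp_Times)

lemma additive_on_rel_d:
  assumes "deRham_data FX dX FA dA pull"
  shows "additive_on (rel_forms FX FA m) (rel_d dX dA pull)"
proof -
  have "additive_on (FX m) dX" "additive_on (FX m) pull" "additive_on (FA (m - 1)) dA"
    using assms unfolding deRham_data_def by blast+
  then show ?thesis
    unfolding additive_on_def rel_forms_def rel_d_def by (auto simp: algebra_simps)
qed

lemma rel_diff_ext_atD:
  assumes "rel_diff_ext_at FX dX FA dA pull C chr Hat I R a"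
  shows "subgrp (Hat n)" and "additive_on (Hat n) R"
    and "R ` Hat n \<subseteq> closed_rel_forms FX FA dX dA pull n"
    and "a ` rel_forms FX FA (n - 1) \<subseteq> Hat n"
    and "\<And>q. q \<in> rel_forms FX FA (n - 1) \<Longrightarrow> R (a q) = rel_d dX dA pull q"
    and "\<And>\<alpha>. \<alpha> \<in> Hat n \<Longrightarrow>
           \<exists>q\<in>rel_forms FX FA (n - 1). R \<alpha> = chr (I \<alpha>) + rel_d dX dA pull q"
    and "I ` Hat n = C n"
  using assms[unfolded rel_diff_ext_at_def, THEN spec[of _ n]] by (elim conjE; blast)+

lemma curvature_image_subset_Omega_ch:
  assumes "rel_diff_ext_at FX dX FA dA pull C chr Hat I R a"
  shows "R ` Hat n \<subseteq> Omega_ch FX dX FA dA pull C chr n"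
proof
  fix w assume "w \<in> R ` Hat n"
  then obtain \<beta> where \<beta>: "\<beta> \<in> Hat n" "w = R \<beta>" by blast
  have "w \<in> closed_rel_forms FX FA dX dA pull n" "I \<beta> \<in> C n"
    using rel_diff_ext_atD(3,7)[OF assms] \<beta> by blast+
  moreover obtain q where "q \<in> rel_forms FX FA (n - 1)" "R \<beta> = chr (I \<beta>) + rel_d dX dA pull q"
    using rel_diff_ext_atD(6)[OF assms \<beta>(1)] by blast
  ultimately show "w \<in> Omega_ch FX dX FA dA pull C chr n"
    unfolding Omega_ch_def using \<beta>(2) by blast
qed

lemma Omega_ch_subset_curvature_image:
  assumes dR: "deRham_data FX dX FA dA pull"
    and ext: "rel_diff_ext_at FX dX FA dA pull C chr Hat I R a"
  shows "Omega_ch FX dX FA dA pull C chr n \<subseteq> R ` Hat n"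
proof
  let ?d = "rel_d dX dA pull"
  fix w assume "w \<in> Omega_ch FX dX FA dA pull C chr n"
  then obtain x q where x: "x \<in> C n" and q: "q \<in> rel_forms FX FA (n - 1)"
    and w: "w = chr x + ?d q"
    unfolding Omega_ch_def by blast
  obtain \<beta> where \<beta>: "\<beta> \<in> Hat n" "I \<beta> = x"
    using rel_diff_ext_atD(7)[OF ext] x by (metis imageE)
  obtain q' where q': "q' \<in> rel_forms FX FA (n - 1)" "R \<beta> = chr x + ?d q'"
    using rel_diff_ext_atD(6)[OF ext \<beta>(1)] \<beta>(2) by blast
  have "q - q' \<in> rel_forms FX FA (n - 1)"
    using subgrp_rel_forms[OF dR] q q'(1) unfolding subgrp_def by blast
  then have a_corr: "a (q - q') \<in> Hat n" "R (a (q - q')) = ?d q - ?d q'"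
    using rel_diff_ext_atD(4,5)[OF ext]
      additive_on_diff[OF subgrp_rel_forms[OF dR] additive_on_rel_d[OF dR] q q'(1)]
    by auto
  have "\<beta> + a (q - q') \<in> Hat n"
    using rel_diff_ext_atD(1)[OF ext] \<beta>(1) a_corr(1) unfolding subgrp_def by blast
  moreover have "R (\<beta> + a (q - q')) = w"
    using rel_diff_ext_atD(2)[OF ext] \<beta>(1) a_corr q'(2) w unfolding additive_on_def by simp
  ultimately show "w \<in> R ` Hat n" by (metis image_eqI)
qed

theorem lemma2p4:
  fixes FX :: "int \<Rightarrow> 'x::ab_group_add set" and dX :: "'x \<Rightarrow> 'x"
    and FA :: "int \<Rightarrow> 'y::ab_group_add set" and dA :: "'y \<Rightarrow> 'y"
    and pull :: "'x \<Rightarrow> 'y"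
    and C :: "int \<Rightarrow> 'c::ab_group_add set" and chr :: "'c \<Rightarrow> 'x \<times> 'y"
    and Hat :: "int \<Rightarrow> 'h::ab_group_add set" and I :: "'h \<Rightarrow> 'c"
    and R :: "'h \<Rightarrow> 'x \<times> 'y" and a :: "'x \<times> 'y \<Rightarrow> 'h"
  assumes "deRham_data FX dX FA dA pull"
    and "chern_data FX dX FA dA pull C chr"
    and "rel_diff_ext_at FX dX FA dA pull C chr Hat I R a"
  shows "R ` Hat n = Omega_ch FX dX FA dA pull C chr n
    \<and> flat_classes Hat R n = {\<alpha> \<in> Hat n. R \<alpha> = 0}
    \<and> (\<forall>w\<in>Omega_ch FX dX FA dA pull C chr n. \<exists>\<alpha>\<in>Hat n. R \<alpha> = w)"
proof -
  have image: "R ` Hat n = Omega_ch FX dX FA dA pull C chr n"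
    using curvature_image_subset_Omega_ch[OF assms(3)]
      Omega_ch_subset_curvature_image[OF assms(1,3)] by (rule subset_antisym)
  then show ?thesis by (auto simp: flat_classes_def image[symmetric])
qed

end
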